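(* Let $R=K[x_1,\ldots,x_n,x_{n+1}]$ over a field $K$, let $I\subset R$ be a monomial ideal with $\gcd(u,x_{n+1})=1$ for all $u\in\mathcal{G}(I)$, let $\mathfrak{m}=(x_1,\ldots,x_{n+1})$ and $\mathfrak{q}=(x_1,\ldots,x_n)$, assume $I\neq\mathfrak{q}$, and set $L:=I+x_{n+1}\mathfrak{q}$. Suppose that $(I^t:v)=\mathfrak{q}$ for some $t\geq1$ and some monomial $v\in R$, and that there is $\lambda\in\{1,\ldots,n\}$ such that whenever $x_\lambda v=f_1\cdots f_tM$ with $f_1,\ldots,f_t\in\mathcal{G}(I)$ and $M$ a monomial of $R$, there is an index $j$ with $x_\lambda\mid Mf_j$ and $Mf_j/x_\lambda\neq1$. Then $\mathfrak{m}\in\mathrm{Ass}(R/L^t)$.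
   Context: $\mathcal{G}(I)$ denotes the unique minimal set of monomial generators of a monomial ideal $I$. *)

theory Defs
  imports Main "HOL-Library.Poly_Mapping"
begin

type_synonym 'a mpoly = "(nat \<Rightarrow>\<^sub>0 nat) \<Rightarrow>\<^sub>0 'a"

definition polyR :: "nat \<Rightarrow> 'a::field mpoly set" where
  "polyR N = {p :: 'a mpoly. \<forall>m\<in>Poly_Mapping.keys p. Poly_Mapping.keys m \<subseteq> {1..N}}"

definition monom :: "(nat \<Rightarrow>\<^sub>0 nat) \<Rightarrow> 'a::field mpoly" where
  "monom a = Poly_Mapping.single a 1"

definition Var :: "nat \<Rightarrow> 'a::field mpoly" where
  "Var i = monom (Poly_Mapping.single i 1)"

definition is_ideal :: "'a::field mpoly set \<Rightarrow> 'a mpoly set \<Rightarrow> bool" where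
  "is_ideal R I \<longleftrightarrow> I \<subseteq> R \<and> 0 \<in> I \<and> (\<forall>a\<in>I. \<forall>b\<in>I. a + b \<in> I)
      \<and> (\<forall>r\<in>R. \<forall>a\<in>I. r * a \<in> I)"

definition ideal_gen :: "'a::field mpoly set \<Rightarrow> 'a mpoly set \<Rightarrow> 'a mpoly set" where
  "ideal_gen R S = \<Inter>{I. is_ideal R I \<and> S \<subseteq> I}"

definition ideal_prod :: "'a::field mpoly set \<Rightarrow> 'a mpoly set \<Rightarrow> 'a mpoly set \<Rightarrow> 'a mpoly set" where
  "ideal_prod R I J = ideal_gen R {a * b | a b. a \<in> I \<and> b \<in> J}"

fun ideal_pow :: "'a::field mpoly set \<Rightarrow> 'a mpoly set \<Rightarrow> nat \<Rightarrow> 'a mpoly set" where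
  "ideal_pow R I 0 = R"
| "ideal_pow R I (Suc t) = ideal_prod R (ideal_pow R I t) I"

definition colon :: "'a::field mpoly set \<Rightarrow> 'a mpoly set \<Rightarrow> 'a mpoly \<Rightarrow> 'a mpoly set" where
  "colon R J f = {g \<in> R. g * f \<in> J}"

definition prime_ideal :: "'a::field mpoly set \<Rightarrow> 'a mpoly set \<Rightarrow> bool" where
  "prime_ideal R P \<longleftrightarrow> is_ideal R P \<and> P \<noteq> R \<and>
      (\<forall>a\<in>R. \<forall>b\<in>R. a * b \<in> P \<longrightarrow> a \<in> P \<or> b \<in> P)"

text \<open>Associated primes of R/J: primes of the form (J : f) = Ann(f + J), f in R.\<close>
definition Ass :: "'a::field mpoly set \<Rightarrow> 'a mpoly set \<Rightarrow> 'a mpoly set set" where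
  "Ass R J = {P. prime_ideal R P \<and> (\<exists>f\<in>R. colon R J f = P)}"

definition mdvd :: "(nat \<Rightarrow>\<^sub>0 nat) \<Rightarrow> (nat \<Rightarrow>\<^sub>0 nat) \<Rightarrow> bool" where
  "mdvd a b \<longleftrightarrow> (\<forall>i. Poly_Mapping.lookup a i \<le> Poly_Mapping.lookup b i)"

definition is_monomial_ideal :: "nat \<Rightarrow> 'a::field mpoly set \<Rightarrow> bool" where
  "is_monomial_ideal N I \<longleftrightarrow> is_ideal (polyR N) I \<and>
     I = ideal_gen (polyR N) {monom a | a. Poly_Mapping.keys a \<subseteq> {1..N} \<and> monom a \<in> I}"

definition mingens :: "nat \<Rightarrow> 'a::field mpoly set \<Rightarrow> (nat \<Rightarrow>\<^sub>0 nat) set" where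
  "mingens N I = {a. Poly_Mapping.keys a \<subseteq> {1..N} \<and> monom a \<in> I \<and>
     (\<forall>b. Poly_Mapping.keys b \<subseteq> {1..N} \<and> (monom b :: 'a mpoly) \<in> I \<and> mdvd b a \<longrightarrow> b = a)}"

end

theory Submission
  imports Defs
begin

text \<open>
  Monomial ideals are handled through exponent sets: products of \<open>t\<close> generators correspond to
  sums of \<open>t\<close> exponents, and colon ideals by monomials to divisibility of exponents.
  From \<open>(I\<^sup>t : v) = q\<close> we get \<open>v \<notin> I\<^sup>t\<close> but \<open>x\<^sub>i v \<in> I\<^sup>t\<close> for \<open>i \<le> n\<close>.  As the generators of \<open>I\<close>
  avoid \<open>x\<^sub>n\<^sub>+\<^sub>1\<close>, the same holds for the part \<open>v'\<close> of \<open>v\<close> free of \<open>x\<^sub>n\<^sub>+\<^sub>1\<close>, and \<open>deg v' \<ge> t\<close>: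
  otherwise \<open>x\<^sub>i v'\<close> would itself be a product of \<open>t\<close> generators, forcing all \<open>x\<^sub>i\<close> into \<open>G(I)\<close>
  and \<open>I = q\<close>.  Using the generators \<open>x\<^sub>n\<^sub>+\<^sub>1 x\<^sub>i\<close> of \<open>L\<close>, \<open>x\<^sub>n\<^sub>+\<^sub>1\<^sup>t v' \<in> L\<^sup>t\<close>, while \<open>v' \<notin> L\<^sup>t\<close>.
  For the least \<open>c\<close> with \<open>x\<^sub>n\<^sub>+\<^sub>1\<^sup>c v' \<in> L\<^sup>t\<close>, the monomial \<open>w = x\<^sub>n\<^sub>+\<^sub>1\<^sup>c\<^sup>-\<^sup>1 v'\<close> satisfies
  \<open>(L\<^sup>t : w) = m\<close>, and \<open>m\<close> is prime.
\<close>

abbreviation in_vars :: "nat \<Rightarrow> (nat \<Rightarrow>\<^sub>0 nat) \<Rightarrow> bool" where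
  "in_vars N m \<equiv> Poly_Mapping.keys m \<subseteq> {1..N}"

text \<open>Stated with \<open>Suc 0\<close>, the simp normal form of \<open>1 :: nat\<close>, so that simplified terms still match.\<close>
abbreviation var_exp :: "nat \<Rightarrow> nat \<Rightarrow>\<^sub>0 nat" where
  "var_exp i \<equiv> Poly_Mapping.single i (Suc 0)"

lemma mdvd_refl [simp]: "mdvd a a"
  by (simp add: mdvd_def)

lemma zero_mdvd [simp]: "mdvd 0 a"
  by (simp add: mdvd_def)

lemma mdvd_trans: "mdvd a b \<Longrightarrow> mdvd b c \<Longrightarrow> mdvd a c"
  unfolding mdvd_def using le_trans by blast

lemma mdvd_add: "mdvd a b \<Longrightarrow> mdvd c d \<Longrightarrow> mdvd (a + c) (b + d)"
  unfolding mdvd_def by (simp add: lookup_add add_mono)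

lemma mdvd_add_left: "mdvd a b \<Longrightarrow> mdvd a (c + b)"
  unfolding mdvd_def by (simp add: lookup_add add_increasing)

lemma mdvd_add_diff: "mdvd a b \<Longrightarrow> a + (b - a) = b"
  unfolding mdvd_def by (rule poly_mapping_eqI) (simp add: lookup_add lookup_minus)

lemma exp_add_eq_0_iff: "a + b = (0 :: nat \<Rightarrow>\<^sub>0 nat) \<longleftrightarrow> a = 0 \<and> b = 0"
  by (auto simp: poly_mapping_eq_iff lookup_add fun_eq_iff)

lemma var_exp_mdvd_iff: "mdvd (var_exp i) m \<longleftrightarrow> i \<in> Poly_Mapping.keys m"
  by (auto simp: mdvd_def lookup_single when_def in_keys_iff)

lemma in_vars_mono: "in_vars M m \<Longrightarrow> M \<le> N \<Longrightarrow> in_vars N m"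
  by auto

lemma in_vars_add: "in_vars N a \<Longrightarrow> in_vars N b \<Longrightarrow> in_vars N (a + b)"
  using keys_add[of a b] by blast

lemma in_vars_diff: "in_vars N a \<Longrightarrow> in_vars N (a - b)"
  by (auto simp: in_keys_iff lookup_minus)

lemma in_vars_Suc_iff: "in_vars (Suc n) m \<and> Poly_Mapping.lookup m (Suc n) = 0 \<longleftrightarrow> in_vars n m"
  by (auto simp: subset_iff in_keys_iff le_Suc_eq) (metis less_irrefl)

lemma lookup_eq_0_if_in_vars:
  assumes "in_vars N m" "N < j"
  shows "Poly_Mapping.lookup m j = 0"
proof -
  have "j \<notin> Poly_Mapping.keys m"
    using assms by auto
  then show ?thesis
    by (simp add: in_keys_iff)
qed

lemma in_vars_nonzero_imp_var_exp_mdvd: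
  assumes "in_vars N m" "m \<noteq> 0"
  shows "\<exists>i\<in>{1..N}. mdvd (var_exp i) m"
proof -
  obtain i where "i \<in> Poly_Mapping.keys m"
    using assms(2) by (metis ex_in_conv keys_eq_empty)
  then show ?thesis
    using assms(1) var_exp_mdvd_iff by blast
qed

lemma polyR_add: "p \<in> polyR N \<Longrightarrow> q \<in> polyR N \<Longrightarrow> p + q \<in> polyR N"
  using keys_add[of p q] by (auto simp: polyR_def)

lemma polyR_mult:
  assumes "p \<in> polyR N" "q \<in> polyR N"
  shows "p * q \<in> polyR N"
  unfolding polyR_def
proof (intro CollectI ballI)
  fix m assume "m \<in> Poly_Mapping.keys (p * q)"
  then obtain a b where "m = a + b" "a \<in> Poly_Mapping.keys p" "b \<in> Poly_Mapping.keys q"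
    using keys_mult by blast
  then show "in_vars N m"
    using assms in_vars_add by (auto simp: polyR_def)
qed

lemma zero_in_polyR: "0 \<in> polyR N"
  by (simp add: polyR_def)

lemma one_in_polyR: "1 \<in> polyR N"
  by (simp add: polyR_def)

lemma keys_monom [simp]: "Poly_Mapping.keys (monom a :: 'a::field mpoly) = {a}"
  by (simp add: monom_def)

lemma monom_in_polyR: "in_vars N a \<Longrightarrow> monom a \<in> polyR N"
  by (simp add: polyR_def)

lemma monom_mult: "monom a * monom b = (monom (a + b) :: 'a::field mpoly)"
  by (simp add: monom_def mult_single)

lemma is_ideal_polyR: "is_ideal (polyR N) (polyR N)"
  by (simp add: is_ideal_def zero_in_polyR polyR_add polyR_mult)

lemma ideal_gen_least: "S \<subseteq> J \<Longrightarrow> is_ideal R J \<Longrightarrow> ideal_gen R S \<subseteq> J"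
  unfolding ideal_gen_def by blast

lemma subset_ideal_gen: "S \<subseteq> ideal_gen R S"
  unfolding ideal_gen_def by blast

lemma is_ideal_ideal_gen:
  assumes "S \<subseteq> polyR N"
  shows "is_ideal (polyR N) (ideal_gen (polyR N) S)"
proof -
  let ?F = "{J. is_ideal (polyR N) J \<and> S \<subseteq> J}"
  have "polyR N \<in> ?F"
    using assms is_ideal_polyR by blast
  then have "\<Inter>?F \<subseteq> polyR N"
    by blast
  moreover have "\<forall>a\<in>\<Inter>?F. \<forall>b\<in>\<Inter>?F. a + b \<in> \<Inter>?F" "\<forall>r\<in>polyR N. \<forall>a\<in>\<Inter>?F. r * a \<in> \<Inter>?F"
    unfolding is_ideal_def by blast+
  ultimately show ?thesis
    unfolding ideal_gen_def is_ideal_def[of "polyR N" "\<Inter>?F"] by (auto simp: is_ideal_def)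
qed

lemma ideal_gen_mono:
  "A \<subseteq> ideal_gen (polyR N) B \<Longrightarrow> B \<subseteq> polyR N \<Longrightarrow> ideal_gen (polyR N) A \<subseteq> ideal_gen (polyR N) B"
  by (rule ideal_gen_least[OF _ is_ideal_ideal_gen])

lemma ideal_sum_mem:
  "finite A \<Longrightarrow> is_ideal R J \<Longrightarrow> (\<And>x. x \<in> A \<Longrightarrow> f x \<in> J) \<Longrightarrow> sum f A \<in> J"
  by (induction A rule: finite_induct) (simp_all add: is_ideal_def)

lemma poly_eq_sum_single:
  "(p :: 'a::field mpoly) = (\<Sum>k\<in>Poly_Mapping.keys p. Poly_Mapping.single k (Poly_Mapping.lookup p k))"
  by (rule poly_mapping_eqI) (simp add: lookup_sum lookup_single when_def sum.delta' in_keys_iff)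

lemma lookup_mult_monom:
  "Poly_Mapping.lookup ((g :: 'a::field mpoly) * monom w) (k + w) = Poly_Mapping.lookup g k"
proof -
  have "g * monom w = (\<Sum>k\<in>Poly_Mapping.keys g. Poly_Mapping.single (k + w) (Poly_Mapping.lookup g k))"
    by (subst poly_eq_sum_single) (simp add: sum_distrib_right monom_def mult_single)
  then show ?thesis
    by (simp add: lookup_sum lookup_single when_def sum.delta' in_keys_iff)
qed

lemma lookup_mult_zero:
  "Poly_Mapping.lookup ((a :: 'a::field mpoly) * b) 0 = Poly_Mapping.lookup a 0 * Poly_Mapping.lookup b 0"
proof -
  let ?la = "Poly_Mapping.lookup a" and ?lb = "Poly_Mapping.lookup b"
  have "a * b = (\<Sum>k\<in>Poly_Mapping.keys a. \<Sum>l\<in>Poly_Mapping.keys b. Poly_Mapping.single (k + l) (?la k * ?lb l))"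
    by (subst (1 2) poly_eq_sum_single) (simp add: sum_product mult_single)
  then have "Poly_Mapping.lookup (a * b) 0
      = (\<Sum>k\<in>Poly_Mapping.keys a. \<Sum>l\<in>Poly_Mapping.keys b. if k + l = 0 then ?la k * ?lb l else 0)"
    by (simp add: lookup_sum lookup_single when_def)
  also have "\<dots> = (\<Sum>k\<in>Poly_Mapping.keys a. if k = 0 then (\<Sum>l\<in>Poly_Mapping.keys b. if l = 0 then ?la k * ?lb l else 0) else 0)"
    by (rule sum.cong) (auto simp: exp_add_eq_0_iff)
  also have "\<dots> = ?la 0 * ?lb 0"
    by (simp add: sum.delta' in_keys_iff)
  finally show ?thesis .
qed

text \<open>The ideal of \<open>polyR N\<close> generated by the monomials with exponents in \<open>S\<close>, given by its
  membership criterion (see \<open>ideal_gen_monom_eq_monideal\<close>).\<close>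
definition monideal :: "nat \<Rightarrow> (nat \<Rightarrow>\<^sub>0 nat) set \<Rightarrow> 'a::field mpoly set" where
  "monideal N S = {p \<in> polyR N. \<forall>k\<in>Poly_Mapping.keys p. \<exists>s\<in>S. mdvd s k}"

lemma monideal_subset_polyR: "monideal N S \<subseteq> polyR N"
  by (auto simp: monideal_def)

lemma is_ideal_monideal: "is_ideal (polyR N) (monideal N S :: 'a::field mpoly set)"
  unfolding is_ideal_def
proof (intro conjI ballI)
  show "monideal N S \<subseteq> polyR N" "0 \<in> monideal N S"
    by (auto simp: monideal_def zero_in_polyR)
next
  fix a b :: "'a mpoly" assume "a \<in> monideal N S" "b \<in> monideal N S"
  then show "a + b \<in> monideal N S"
    using keys_add[of a b] by (auto simp: monideal_def polyR_add)
next
  fix r a :: "'a mpoly" assume r: "r \<in> polyR N" and a: "a \<in> monideal N S"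
  have "\<exists>s\<in>S. mdvd s k" if "k \<in> Poly_Mapping.keys (r * a)" for k
  proof -
    obtain x y where "k = x + y" "y \<in> Poly_Mapping.keys a"
      using \<open>k \<in> _\<close> keys_mult by blast
    then show ?thesis
      using a mdvd_add_left by (fastforce simp: monideal_def)
  qed
  then show "r * a \<in> monideal N S"
    using r a by (simp add: monideal_def polyR_mult)
qed

lemma monideal_subset:
  "\<forall>s\<in>S. \<exists>t\<in>T. mdvd t s \<Longrightarrow> monideal N S \<subseteq> monideal N T"
  unfolding monideal_def using mdvd_trans by blast

lemma monom_in_monideal_iff:
  "in_vars N w \<Longrightarrow> monom w \<in> monideal N S \<longleftrightarrow> (\<exists>s\<in>S. mdvd s w)"
  by (auto simp: monideal_def monom_in_polyR)

lemma ideal_gen_monom_eq_monideal: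
  assumes S: "\<forall>s\<in>S. in_vars N s"
  shows "ideal_gen (polyR N) (monom ` S) = (monideal N S :: 'a::field mpoly set)"
proof
  show "ideal_gen (polyR N) (monom ` S) \<subseteq> (monideal N S :: 'a mpoly set)"
    using S by (intro ideal_gen_least is_ideal_monideal) (force simp: monom_in_monideal_iff)
  have J: "is_ideal (polyR N) (ideal_gen (polyR N) (monom ` S :: 'a mpoly set))"
    using S by (intro is_ideal_ideal_gen) (auto simp: monom_in_polyR)
  show "monideal N S \<subseteq> ideal_gen (polyR N) (monom ` S :: 'a mpoly set)"
  proof
    fix p :: "'a mpoly" assume p: "p \<in> monideal N S"
    have "Poly_Mapping.single k (Poly_Mapping.lookup p k) \<in> ideal_gen (polyR N) (monom ` S)"
      if k: "k \<in> Poly_Mapping.keys p" for k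
    proof -
      obtain s where s: "s \<in> S" "mdvd s k"
        using p k by (auto simp: monideal_def)
      have "Poly_Mapping.single k (Poly_Mapping.lookup p k)
          = Poly_Mapping.single (k - s) (Poly_Mapping.lookup p k) * monom s"
        by (simp add: monom_def mult_single mdvd_add_diff[OF s(2)] add.commute)
      moreover have "Poly_Mapping.single (k - s) (Poly_Mapping.lookup p k) \<in> polyR N"
        using p k in_vars_diff by (auto simp: monideal_def polyR_def)
      moreover have "monom s \<in> ideal_gen (polyR N) (monom ` S)"
        using s(1) subset_ideal_gen by blast
      ultimately show ?thesis
        using J unfolding is_ideal_def by metis
    qed
    then have "(\<Sum>k\<in>Poly_Mapping.keys p. Poly_Mapping.single k (Poly_Mapping.lookup p k))
        \<in> ideal_gen (polyR N) (monom ` S)"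
      using J by (intro ideal_sum_mem) auto
    then show "p \<in> ideal_gen (polyR N) (monom ` S)"
      by (subst poly_eq_sum_single)
  qed
qed

lemma mult_mem_monideal:
  assumes "a \<in> monideal N S" "b \<in> monideal N T"
  shows "a * b \<in> monideal N {s + t | s t. s \<in> S \<and> t \<in> T}"
proof -
  have "\<exists>u\<in>{s + t | s t. s \<in> S \<and> t \<in> T}. mdvd u k" if k: "k \<in> Poly_Mapping.keys (a * b)" for k
  proof -
    obtain x y where xy: "k = x + y" "x \<in> Poly_Mapping.keys a" "y \<in> Poly_Mapping.keys b"
      using k keys_mult by blast
    obtain s t where "s \<in> S" "mdvd s x" "t \<in> T" "mdvd t y"
      using assms xy by (force simp: monideal_def)
    then show ?thesis
      using xy(1) mdvd_add by blast
  qed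
  then show ?thesis
    using assms by (simp add: monideal_def polyR_mult)
qed

lemma ideal_prod_monideal:
  assumes S: "\<forall>s\<in>S. in_vars N s" and T: "\<forall>t\<in>T. in_vars N t"
  shows "ideal_prod (polyR N) (monideal N S) (monideal N T)
    = (monideal N {s + t | s t. s \<in> S \<and> t \<in> T} :: 'a::field mpoly set)"
    (is "?lhs = monideal N ?ST")
proof
  show "?lhs \<subseteq> monideal N ?ST"
    unfolding ideal_prod_def
    by (rule ideal_gen_least[OF _ is_ideal_monideal]) (use mult_mem_monideal in blast)
  let ?P = "{a * b | a b. a \<in> (monideal N S :: 'a mpoly set) \<and> b \<in> monideal N T}"
  have ST: "in_vars N u" if "u \<in> ?ST" for u
    using that S T in_vars_add by blast
  have "monom u \<in> ?P" if "u \<in> ?ST" for u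
  proof -
    obtain s t where st: "u = s + t" "s \<in> S" "t \<in> T"
      using \<open>u \<in> ?ST\<close> by blast
    then have "monom s \<in> (monideal N S :: 'a mpoly set)" "monom t \<in> (monideal N T :: 'a mpoly set)"
      using S T by (simp_all add: monom_in_monideal_iff) (use mdvd_refl in blast)+
    then show ?thesis
      unfolding st(1) monom_mult[symmetric] by blast
  qed
  then have "monom ` ?ST \<subseteq> ideal_gen (polyR N) ?P"
    using subset_ideal_gen[of ?P "polyR N"] by blast
  moreover have "?P \<subseteq> polyR N"
    by (auto intro!: polyR_mult simp: monideal_def)
  ultimately have "ideal_gen (polyR N) (monom ` ?ST) \<subseteq> ideal_gen (polyR N) ?P"
    by (rule ideal_gen_mono)
  then show "monideal N ?ST \<subseteq> ?lhs"
    using ST by (simp add: ideal_prod_def ideal_gen_monom_eq_monideal)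
qed

fun exp_sums :: "(nat \<Rightarrow>\<^sub>0 nat) set \<Rightarrow> nat \<Rightarrow> (nat \<Rightarrow>\<^sub>0 nat) set" where
  "exp_sums S 0 = {0}"
| "exp_sums S (Suc t) = {a + s | a s. a \<in> exp_sums S t \<and> s \<in> S}"

lemma exp_sums_in_vars: "\<forall>s\<in>S. in_vars N s \<Longrightarrow> p \<in> exp_sums S t \<Longrightarrow> in_vars N p"
  by (induction t arbitrary: p) (simp, use in_vars_add in fastforce)

lemma ideal_pow_monideal:
  assumes "\<forall>s\<in>S. in_vars N s"
  shows "ideal_pow (polyR N) (monideal N S) t = (monideal N (exp_sums S t) :: 'a::field mpoly set)"
proof (induction t)
  case 0
  show ?case
    by (auto simp: monideal_def)
next
  case (Suc t)
  then show ?case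
    using ideal_prod_monideal[of "exp_sums S t" N S] exp_sums_in_vars[OF assms] assms by simp
qed

lemma ideal_gen_Var:
  assumes "M \<le> N"
  shows "ideal_gen (polyR N) (Var ` {1..M}) = (monideal N (var_exp ` {1..M}) :: 'a::field mpoly set)"
proof -
  have "(Var ` {1..M} :: 'a mpoly set) = monom ` var_exp ` {1..M}"
    by (simp add: Var_def image_image)
  then show ?thesis
    using assms by (simp add: ideal_gen_monom_eq_monideal)
qed

lemma colon_monideal_eq_varsD:
  assumes w: "in_vars N w" and M: "M \<le> N"
    and colon: "colon (polyR N) (monideal N P) (monom w) = (monideal N (var_exp ` {1..M}) :: 'a::field mpoly set)"
  shows "\<not> (\<exists>p\<in>P. mdvd p w)" "\<forall>i\<in>{1..M}. \<exists>p\<in>P. mdvd p (var_exp i + w)"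
proof
  assume "\<exists>p\<in>P. mdvd p w"
  then have "(1 :: 'a mpoly) \<in> colon (polyR N) (monideal N P) (monom w)"
    using w by (simp add: colon_def one_in_polyR monom_in_monideal_iff)
  then have "(1 :: 'a mpoly) \<in> monideal N (var_exp ` {1..M})"
    by (simp only: colon)
  then show False
    by (auto simp: monideal_def var_exp_mdvd_iff)
next
  show "\<forall>i\<in>{1..M}. \<exists>p\<in>P. mdvd p (var_exp i + w)"
  proof
    fix i assume i: "i \<in> {1..M}"
    have "(monom (var_exp i) :: 'a mpoly) \<in> monideal N (var_exp ` {1..M})"
      using i M by (subst monom_in_monideal_iff) force+
    then have "(monom (var_exp i) :: 'a mpoly) \<in> colon (polyR N) (monideal N P) (monom w)"
      by (simp only: colon)
    then have "(monom (var_exp i + w) :: 'a mpoly) \<in> monideal N P"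
      by (simp add: colon_def monom_mult)
    moreover have "in_vars N (var_exp i + w)"
      using i M w by (intro in_vars_add) auto
    ultimately show "\<exists>p\<in>P. mdvd p (var_exp i + w)"
      by (simp add: monom_in_monideal_iff)
  qed
qed

lemma colon_monideal_subset_maximal:
  assumes not_dvd: "\<not> (\<exists>p\<in>P. mdvd p w)"
  shows "colon (polyR N) (monideal N P) (monom w) \<subseteq> (monideal N (var_exp ` {1..N}) :: 'a::field mpoly set)"
proof
  fix g :: "'a mpoly" assume "g \<in> colon (polyR N) (monideal N P) (monom w)"
  then have g: "g \<in> polyR N" "g * monom w \<in> monideal N P"
    by (auto simp: colon_def)
  have "\<exists>s\<in>var_exp ` {1..N}. mdvd s k" if k: "k \<in> Poly_Mapping.keys g" for k
  proof -
    \<comment> \<open>a constant term \<open>k = 0\<close> of \<open>g\<close> would make \<open>x\<^sup>w\<close> a monomial of \<open>g x\<^sup>w\<close>\<close>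
    have "k \<noteq> 0"
    proof
      assume "k = 0"
      then have "w \<in> Poly_Mapping.keys (g * monom w)"
        using k lookup_mult_monom[of g w 0] by (simp add: in_keys_iff)
      then show False
        using g(2) not_dvd by (auto simp: monideal_def)
    qed
    then show ?thesis
      using g(1) k in_vars_nonzero_imp_var_exp_mdvd by (fastforce simp: polyR_def)
  qed
  then show "g \<in> monideal N (var_exp ` {1..N})"
    using g(1) by (simp add: monideal_def)
qed

lemma monideal_vars_subset_colon:
  assumes w: "in_vars N w" and dvd: "\<forall>i\<in>{1..N}. \<exists>p\<in>P. mdvd p (var_exp i + w)"
  shows "(monideal N (var_exp ` {1..N}) :: 'a::field mpoly set) \<subseteq> colon (polyR N) (monideal N P) (monom w)"
proof
  fix g :: "'a mpoly" assume g: "g \<in> monideal N (var_exp ` {1..N})"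
  have "\<exists>p\<in>P. mdvd p k" if k: "k \<in> Poly_Mapping.keys (g * monom w)" for k
  proof -
    obtain x where x: "k = x + w" "x \<in> Poly_Mapping.keys g"
      using k keys_mult[of g "monom w"] by auto
    obtain i where i: "i \<in> {1..N}" "mdvd (var_exp i) x"
      using g x(2) by (auto simp: monideal_def)
    then show ?thesis
      using dvd x(1) mdvd_trans[OF _ mdvd_add[OF i(2) mdvd_refl]] by blast
  qed
  then show "g \<in> colon (polyR N) (monideal N P) (monom w)"
    using g w by (auto simp: colon_def monideal_def polyR_mult monom_in_polyR)
qed

lemma lookup_zero_ne_0_if_notin_monideal_vars:
  assumes "p \<in> polyR N" "p \<notin> monideal N (var_exp ` {1..N})"
  shows "Poly_Mapping.lookup p 0 \<noteq> 0"
proof -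
  obtain k where "k \<in> Poly_Mapping.keys p" "\<not> (\<exists>s\<in>var_exp ` {1..N}. mdvd s k)"
    using assms by (auto simp: monideal_def)
  moreover from this have "k = 0"
    using assms(1) in_vars_nonzero_imp_var_exp_mdvd by (fastforce simp: polyR_def)
  ultimately show ?thesis
    by (simp add: in_keys_iff)
qed

lemma prime_ideal_monideal_vars:
  "prime_ideal (polyR N) (monideal N (var_exp ` {1..N}) :: 'a::field mpoly set)"
  unfolding prime_ideal_def
proof (intro conjI ballI impI)
  show "is_ideal (polyR N) (monideal N (var_exp ` {1..N}) :: 'a mpoly set)"
    by (rule is_ideal_monideal)
  have "(1 :: 'a mpoly) \<notin> monideal N (var_exp ` {1..N})"
    by (auto simp: monideal_def var_exp_mdvd_iff)
  then show "monideal N (var_exp ` {1..N}) \<noteq> (polyR N :: 'a mpoly set)"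
    using one_in_polyR by blast
next
  fix a b :: "'a mpoly"
  assume ab: "a \<in> polyR N" "b \<in> polyR N" "a * b \<in> monideal N (var_exp ` {1..N})"
  show "a \<in> monideal N (var_exp ` {1..N}) \<or> b \<in> monideal N (var_exp ` {1..N})"
  proof (rule ccontr)
    assume "\<not> ?thesis"
    then have "Poly_Mapping.lookup a 0 \<noteq> 0" "Poly_Mapping.lookup b 0 \<noteq> 0"
      using ab lookup_zero_ne_0_if_notin_monideal_vars by blast+
    then have "0 \<in> Poly_Mapping.keys (a * b)"
      by (simp add: lookup_mult_zero in_keys_iff)
    then have "\<exists>s\<in>var_exp ` {1..N}. mdvd s 0"
      using ab(3) unfolding monideal_def by blast
    then show False
      by (auto simp: var_exp_mdvd_iff)
  qed
qed

text \<open>The exponent-level form of \<open>(P : x\<^sup>w) = m\<close>.\<close>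
definition socle_exp :: "nat \<Rightarrow> (nat \<Rightarrow>\<^sub>0 nat) set \<Rightarrow> (nat \<Rightarrow>\<^sub>0 nat) \<Rightarrow> bool" where
  "socle_exp N P w \<longleftrightarrow>
    in_vars N w \<and> \<not> (\<exists>p\<in>P. mdvd p w) \<and> (\<forall>i\<in>{1..N}. \<exists>p\<in>P. mdvd p (var_exp i + w))"

lemma maximal_ideal_mem_Ass_if_socle_exp:
  assumes "socle_exp N P w"
  shows "ideal_gen (polyR N) (Var ` {1..N}) \<in> Ass (polyR N) (monideal N P :: 'a::field mpoly set)"
proof -
  have "colon (polyR N) (monideal N P) (monom w) = (monideal N (var_exp ` {1..N}) :: 'a mpoly set)"
    using assms colon_monideal_subset_maximal monideal_vars_subset_colon
    unfolding socle_exp_def by (intro equalityI) blast+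
  moreover have "(monom w :: 'a mpoly) \<in> polyR N"
    using assms by (simp add: socle_exp_def monom_in_polyR)
  ultimately show ?thesis
    unfolding Ass_def ideal_gen_Var[OF order_refl] using prime_ideal_monideal_vars by blast
qed

definition tdeg :: "nat \<Rightarrow> (nat \<Rightarrow>\<^sub>0 nat) \<Rightarrow> nat" where
  "tdeg N m = (\<Sum>i=1..N. Poly_Mapping.lookup m i)"

lemma tdeg_add: "tdeg N (a + b) = tdeg N a + tdeg N b"
  by (simp add: tdeg_def lookup_add sum.distrib)

lemma tdeg_mono: "mdvd a b \<Longrightarrow> tdeg N a \<le> tdeg N b"
  unfolding tdeg_def mdvd_def by (rule sum_mono) auto

lemma tdeg_var_exp: "i \<in> {1..N} \<Longrightarrow> tdeg N (var_exp i) = 1"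
  by (simp add: tdeg_def lookup_single when_def)

lemma tdeg_pos: "in_vars N m \<Longrightarrow> m \<noteq> 0 \<Longrightarrow> 1 \<le> tdeg N m"
  using in_vars_nonzero_imp_var_exp_mdvd tdeg_mono tdeg_var_exp by metis

lemma mdvd_tdeg_eq_imp_eq:
  assumes ab: "mdvd a b" and b: "in_vars N b" and deg: "tdeg N a = tdeg N b"
  shows "a = b"
proof (rule ccontr)
  assume "a \<noteq> b"
  then obtain j where lt: "Poly_Mapping.lookup a j < Poly_Mapping.lookup b j"
    using ab by (metis poly_mapping_eqI mdvd_def le_neq_implies_less)
  then have "j \<in> Poly_Mapping.keys b"
    by (simp add: in_keys_iff)
  then have "j \<in> {1..N}"
    using b by blast
  then have "tdeg N a < tdeg N b"
    unfolding tdeg_def using ab lt by (intro sum_strict_mono_ex1) (auto simp: mdvd_def)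
  then show False
    using deg by simp
qed

lemma exists_mingens_mdvd:
  fixes I :: "'a::field mpoly set"
  shows "in_vars N a \<Longrightarrow> monom a \<in> I \<Longrightarrow> \<exists>g\<in>mingens N I. mdvd g a"
proof (induction "tdeg N a" arbitrary: a rule: less_induct)
  case less
  show ?case
  proof (cases "a \<in> mingens N I")
    case False
    then obtain b where b: "in_vars N b" "(monom b :: 'a mpoly) \<in> I" "mdvd b a" "b \<noteq> a"
      using less.prems by (auto simp: mingens_def)
    have "tdeg N b \<noteq> tdeg N a"
      using mdvd_tdeg_eq_imp_eq[OF b(3) less.prems(1)] b(4) by blast
    then have "tdeg N b < tdeg N a"
      using tdeg_mono[OF b(3), of N] by simp
    then obtain g where "g \<in> mingens N I" "mdvd g b"
      using less.hyps b(1,2) by blast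
    then show ?thesis
      using b(3) mdvd_trans by blast
  qed (use mdvd_refl in blast)
qed

lemma monomial_ideal_eq_monideal_mingens:
  assumes "is_monomial_ideal N I"
  shows "I = monideal N (mingens N I)"
proof -
  let ?A = "{a. in_vars N a \<and> monom a \<in> I}"
  have gens: "{monom a | a. in_vars N a \<and> monom a \<in> I} = monom ` ?A"
    by blast
  have "I = ideal_gen (polyR N) (monom ` ?A)"
    using assms unfolding is_monomial_ideal_def gens by blast
  also have "\<dots> = monideal N ?A"
    by (rule ideal_gen_monom_eq_monideal) simp
  also have "\<dots> = monideal N (mingens N I)"
  proof (intro equalityI monideal_subset ballI)
    fix a assume "a \<in> ?A"
    then show "\<exists>g\<in>mingens N I. mdvd g a"
      using exists_mingens_mdvd by blast
  next
    fix g assume "g \<in> mingens N I"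
    then show "\<exists>a\<in>?A. mdvd a g"
      unfolding mingens_def using mdvd_refl by blast
  qed
  finally show ?thesis .
qed

lemma zero_mem_exp_sums: "0 \<in> G \<Longrightarrow> 0 \<in> exp_sums G t"
  by (induction t) force+

lemma exp_sums_mono: "G \<subseteq> H \<Longrightarrow> exp_sums G t \<subseteq> exp_sums H t"
  by (induction t) auto

lemma lookup_exp_sums_eq_0:
  "\<forall>g\<in>G. Poly_Mapping.lookup g j = 0 \<Longrightarrow> p \<in> exp_sums G t \<Longrightarrow> Poly_Mapping.lookup p j = 0"
  by (induction t arbitrary: p) (auto simp: lookup_add)

lemma exp_sums_Un_lookup_eq_0:
  assumes "\<forall>g\<in>G. Poly_Mapping.lookup g j = 0" "\<forall>h\<in>H. Poly_Mapping.lookup h j \<noteq> 0"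
  shows "p \<in> exp_sums (G \<union> H) t \<Longrightarrow> Poly_Mapping.lookup p j = 0 \<Longrightarrow> p \<in> exp_sums G t"
proof (induction t arbitrary: p)
  case (Suc t)
  then obtain a h where ah: "p = a + h" "a \<in> exp_sums (G \<union> H) t" "h \<in> G \<union> H"
    by auto
  with Suc.prems(2) have "Poly_Mapping.lookup a j = 0" "Poly_Mapping.lookup h j = 0"
    by (simp_all add: lookup_add)
  then have "a \<in> exp_sums G t" "h \<in> G"
    using ah assms Suc.IH by auto
  then show ?case
    using ah(1) by auto
qed simp

lemma tdeg_exp_sums_ge:
  "\<forall>g\<in>G. 1 \<le> tdeg N g \<Longrightarrow> p \<in> exp_sums G t \<Longrightarrow> t \<le> tdeg N p"
  by (induction t arbitrary: p) (force simp: tdeg_add)+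

text \<open>Every summand has degree at least one, so total degree \<open>t\<close> forces each summand to be a variable.\<close>
lemma var_exp_mem_if_tdeg_exp_sums_eq:
  assumes G: "\<forall>g\<in>G. in_vars N g \<and> g \<noteq> 0" and i: "i \<in> {1..N}"
  shows "p \<in> exp_sums G t \<Longrightarrow> tdeg N p = t \<Longrightarrow> mdvd (var_exp i) p \<Longrightarrow> var_exp i \<in> G"
proof (induction t arbitrary: p)
  case (Suc t)
  then obtain a g where ag: "p = a + g" "a \<in> exp_sums G t" "g \<in> G"
    by auto
  have G1: "\<forall>g\<in>G. 1 \<le> tdeg N g"
    using G tdeg_pos by blast
  have "t \<le> tdeg N a" "1 \<le> tdeg N g"
    using tdeg_exp_sums_ge[OF G1 ag(2)] G1 ag(3) by blast+
  with Suc.prems(2) ag(1) have "tdeg N a = t" "tdeg N g = 1"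
    by (simp_all add: tdeg_add)
  show ?case
  proof (cases "mdvd (var_exp i) a")
    case True
    then show ?thesis
      using Suc.IH ag(2) \<open>tdeg N a = t\<close> by blast
  next
    case False
    then have "mdvd (var_exp i) g"
      using Suc.prems(3) ag(1) by (auto simp: var_exp_mdvd_iff in_keys_iff lookup_add)
    then have "var_exp i = g"
      by (rule mdvd_tdeg_eq_imp_eq) (use G ag(3) tdeg_var_exp[OF i] \<open>tdeg N g = 1\<close> in auto)
    then show ?thesis
      using ag(3) by simp
  qed
qed (simp add: var_exp_mdvd_iff)

lemma tdeg_ge_if_not_vars_subset:
  assumes G: "\<forall>g\<in>G. in_vars N g \<and> g \<noteq> 0" and v: "in_vars N v"
    and dvd: "\<forall>i\<in>{1..N}. \<exists>p\<in>exp_sums G t. mdvd p (var_exp i + v)"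
    and not_vars: "\<not> var_exp ` {1..N} \<subseteq> G"
  shows "t \<le> tdeg N v"
proof (rule ccontr)
  assume lt: "\<not> t \<le> tdeg N v"
  have "var_exp i \<in> G" if i: "i \<in> {1..N}" for i
  proof -
    obtain p where p: "p \<in> exp_sums G t" "mdvd p (var_exp i + v)"
      using dvd i by blast
    have "\<forall>g\<in>G. 1 \<le> tdeg N g"
      using G tdeg_pos by blast
    then have "t \<le> tdeg N p"
      using tdeg_exp_sums_ge p(1) by blast
    moreover have "tdeg N p \<le> tdeg N (var_exp i + v)" "tdeg N (var_exp i + v) = tdeg N v + 1"
      using tdeg_mono[OF p(2), of N] tdeg_add tdeg_var_exp[OF i] by simp_all
    ultimately have "tdeg N p = t" "tdeg N p = tdeg N (var_exp i + v)"
      using lt by linarith+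
    moreover have "p = var_exp i + v"
      using p(2) i v \<open>tdeg N p = tdeg N (var_exp i + v)\<close>
      by (intro mdvd_tdeg_eq_imp_eq in_vars_add) auto
    ultimately show ?thesis
      using var_exp_mem_if_tdeg_exp_sums_eq[OF G i p(1)] by (simp add: var_exp_mdvd_iff in_keys_iff lookup_add)
  qed
  then show False
    using not_vars by blast
qed

text \<open>Exponents of the generators \<open>x\<^sub>n\<^sub>+\<^sub>1 x\<^sub>i\<close> of \<open>x\<^sub>n\<^sub>+\<^sub>1 q\<close>.\<close>
abbreviation xq_exps :: "nat \<Rightarrow> (nat \<Rightarrow>\<^sub>0 nat) set" where
  "xq_exps n \<equiv> (\<lambda>i. var_exp (Suc n) + var_exp i) ` {1..n}"

lemma exp_sums_xq_mdvd:
  "in_vars n u \<Longrightarrow> s \<le> tdeg n u \<Longrightarrow>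
    \<exists>p\<in>exp_sums (xq_exps n) s. mdvd p (Poly_Mapping.single (Suc n) s + u)"
proof (induction s arbitrary: u)
  case (Suc s)
  then have "u \<noteq> 0"
    by (auto simp: tdeg_def)
  then obtain i where i: "i \<in> {1..n}" "mdvd (var_exp i) u"
    using in_vars_nonzero_imp_var_exp_mdvd[OF Suc.prems(1)] by blast
  define u' where "u' = u - var_exp i"
  have u: "u = var_exp i + u'"
    unfolding u'_def using mdvd_add_diff[OF i(2)] by simp
  have "in_vars n u'"
    unfolding u'_def using Suc.prems(1) by (rule in_vars_diff)
  moreover have "s \<le> tdeg n u'"
    using Suc.prems(2) by (subst (asm) u) (simp add: tdeg_add tdeg_var_exp[OF i(1)])
  ultimately obtain p where p: "p \<in> exp_sums (xq_exps n) s" "mdvd p (Poly_Mapping.single (Suc n) s + u')"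
    using Suc.IH by blast
  have "p + (var_exp (Suc n) + var_exp i) \<in> exp_sums (xq_exps n) (Suc s)"
    using p(1) i(1) by force
  moreover have "Poly_Mapping.single (Suc n) (Suc s) + u
      = (Poly_Mapping.single (Suc n) s + u') + (var_exp (Suc n) + var_exp i)"
    unfolding u by (rule poly_mapping_eqI) (simp add: lookup_add lookup_single when_def)
  then have "mdvd (p + (var_exp (Suc n) + var_exp i)) (Poly_Mapping.single (Suc n) (Suc s) + u)"
    using mdvd_add[OF p(2) mdvd_refl] by simp
  ultimately show ?case
    by blast
qed simp

lemma exp_sums_Un_xq_mem_if_mdvd:
  assumes G: "\<forall>g\<in>G. in_vars n g" and v: "in_vars n v"
    and p: "p \<in> exp_sums (G \<union> xq_exps n) t" "mdvd p v"
  shows "p \<in> exp_sums G t"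
proof -
  have "Poly_Mapping.lookup v (Suc n) = 0"
    using v by (simp add: lookup_eq_0_if_in_vars)
  then have "Poly_Mapping.lookup p (Suc n) = 0"
    using p(2) unfolding mdvd_def by (metis le_zero_eq)
  moreover have "\<forall>g\<in>G. Poly_Mapping.lookup g (Suc n) = 0"
    using G lookup_eq_0_if_in_vars[where N = n and j = "Suc n"] by simp
  moreover have "\<forall>h\<in>xq_exps n. Poly_Mapping.lookup h (Suc n) \<noteq> 0"
    by (simp add: lookup_add)
  ultimately show ?thesis
    using exp_sums_Un_lookup_eq_0 p(1) by blast
qed

lemma exists_socle_exp_of_in_vars:
  assumes G: "\<forall>g\<in>G. in_vars n g" and v: "in_vars n v"
    and not_dvd: "\<not> (\<exists>p\<in>exp_sums G t. mdvd p v)"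
    and dvd: "\<forall>i\<in>{1..n}. \<exists>p\<in>exp_sums G t. mdvd p (var_exp i + v)"
    and deg: "t \<le> tdeg n v"
  shows "\<exists>w. socle_exp (Suc n) (exp_sums (G \<union> xq_exps n) t) w"
proof -
  define Z where "Z c \<longleftrightarrow> (\<exists>p\<in>exp_sums (G \<union> xq_exps n) t. mdvd p (Poly_Mapping.single (Suc n) c + v))" for c
  have "Z t"
  proof -
    obtain p where "p \<in> exp_sums (xq_exps n) t" "mdvd p (Poly_Mapping.single (Suc n) t + v)"
      using exp_sums_xq_mdvd[OF v deg] by blast
    moreover have "exp_sums (xq_exps n) t \<subseteq> exp_sums (G \<union> xq_exps n) t"
      by (rule exp_sums_mono) blast
    ultimately show ?thesis
      unfolding Z_def by blast
  qed
  have "\<not> Z 0"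
    using exp_sums_Un_xq_mem_if_mdvd[OF G v] not_dvd unfolding Z_def by auto
  define c where "c = (LEAST c. Z c)"
  \<comment> \<open>by minimality of \<open>c\<close>, \<open>w = x\<^sub>n\<^sub>+\<^sub>1\<^sup>c\<^sup>-\<^sup>1 v\<close> lies outside \<open>L\<^sup>t\<close> while \<open>x\<^sub>n\<^sub>+\<^sub>1 w\<close> lies in it\<close>
  have "Z c"
    unfolding c_def using \<open>Z t\<close> by (rule LeastI)
  have "c \<noteq> 0"
    using \<open>Z c\<close> \<open>\<not> Z 0\<close> by (cases c) auto
  then have "\<not> Z (c - 1)"
    using not_less_Least[of "c - 1" Z] unfolding c_def by simp
  define w where "w = Poly_Mapping.single (Suc n) (c - 1) + v"
  have "\<exists>p\<in>exp_sums (G \<union> xq_exps n) t. mdvd p (var_exp i + w)" if i: "i \<in> {1..Suc n}" for i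
  proof (cases "i = Suc n")
    case True
    then have "var_exp i + w = Poly_Mapping.single (Suc n) c + v"
      unfolding w_def using \<open>c \<noteq> 0\<close>
      by (intro poly_mapping_eqI) (simp add: lookup_add lookup_single when_def)
    then show ?thesis
      using \<open>Z c\<close> unfolding Z_def by simp
  next
    case False
    then obtain p where "p \<in> exp_sums G t" "mdvd p (var_exp i + v)"
      using i dvd by force
    moreover have "mdvd (var_exp i + v) (var_exp i + w)"
      unfolding w_def by (metis add.left_commute mdvd_add_left mdvd_refl)
    ultimately show ?thesis
      using exp_sums_mono[of G "G \<union> xq_exps n"] mdvd_trans by blast
  qed
  moreover have "in_vars (Suc n) w"
    unfolding w_def by (rule in_vars_add) (use v in auto)
  moreover have "\<not> (\<exists>p\<in>exp_sums (G \<union> xq_exps n) t. mdvd p w)"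
    using \<open>\<not> Z (c - 1)\<close> unfolding Z_def w_def .
  ultimately show ?thesis
    unfolding socle_exp_def by blast
qed

lemma mdvd_iff_if_lookup_eq_except:
  assumes "Poly_Mapping.lookup p j = 0" "\<forall>k. k \<noteq> j \<longrightarrow> Poly_Mapping.lookup u k = Poly_Mapping.lookup u' k"
  shows "mdvd p u \<longleftrightarrow> mdvd p u'"
proof -
  have "Poly_Mapping.lookup p k \<le> Poly_Mapping.lookup u k \<longleftrightarrow> Poly_Mapping.lookup p k \<le> Poly_Mapping.lookup u' k" for k
    using assms by (cases "k = j") auto
  then show ?thesis
    unfolding mdvd_def by blast
qed

lemma in_vars_diff_single_Suc:
  assumes "in_vars (Suc n) v"
  shows "in_vars n (v - Poly_Mapping.single (Suc n) (Poly_Mapping.lookup v (Suc n)))"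
proof
  fix k assume k: "k \<in> Poly_Mapping.keys (v - Poly_Mapping.single (Suc n) (Poly_Mapping.lookup v (Suc n)))"
  then have "k \<noteq> Suc n"
    by (auto simp: in_keys_iff lookup_minus)
  moreover from this have "k \<in> Poly_Mapping.keys v"
    using k by (simp add: in_keys_iff lookup_minus lookup_single)
  ultimately show "k \<in> {1..n}"
    using assms by auto
qed

lemma exp_sums_mdvd_diff_single_Suc_iff:
  assumes "\<forall>g\<in>G. in_vars n g" "p \<in> exp_sums G t"
  shows "mdvd p (u + (v - Poly_Mapping.single (Suc n) (Poly_Mapping.lookup v (Suc n)))) \<longleftrightarrow> mdvd p (u + v)"
proof (rule mdvd_iff_if_lookup_eq_except)
  show "Poly_Mapping.lookup p (Suc n) = 0"
    using assms lookup_eq_0_if_in_vars[where N = n and j = "Suc n"]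
    by (intro lookup_exp_sums_eq_0) simp_all
  show "\<forall>k. k \<noteq> Suc n \<longrightarrow> Poly_Mapping.lookup (u + (v - Poly_Mapping.single (Suc n) (Poly_Mapping.lookup v (Suc n)))) k
      = Poly_Mapping.lookup (u + v) k"
    by (simp add: lookup_add lookup_minus lookup_single)
qed

lemma monideal_eq_if_var_exps_subset:
  assumes "var_exp ` {1..n} \<subseteq> G" "\<forall>g\<in>G. in_vars n g \<and> g \<noteq> 0"
  shows "monideal N G = monideal N (var_exp ` {1..n})"
proof (intro equalityI monideal_subset ballI)
  fix g assume "g \<in> G"
  then show "\<exists>s\<in>var_exp ` {1..n}. mdvd s g"
    using assms(2) in_vars_nonzero_imp_var_exp_mdvd[of g n] by blast
next
  fix s assume "s \<in> var_exp ` {1..n}"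
  then show "\<exists>g\<in>G. mdvd g s"
    using assms(1) by (intro bexI[of _ s]) auto
qed

lemma exists_socle_exp:
  assumes G: "\<forall>g\<in>G. in_vars n g" and v: "in_vars (Suc n) v"
    and not_dvd: "\<not> (\<exists>p\<in>exp_sums G t. mdvd p v)"
    and dvd: "\<forall>i\<in>{1..n}. \<exists>p\<in>exp_sums G t. mdvd p (var_exp i + v)"
    and ne: "(monideal N G :: 'a::field mpoly set) \<noteq> monideal N (var_exp ` {1..n})"
  shows "\<exists>w. socle_exp (Suc n) (exp_sums (G \<union> xq_exps n) t) w"
proof -
  define v' where "v' = v - Poly_Mapping.single (Suc n) (Poly_Mapping.lookup v (Suc n))"
  have v': "in_vars n v'"
    unfolding v'_def using v by (rule in_vars_diff_single_Suc)
  have not_dvd': "\<not> (\<exists>p\<in>exp_sums G t. mdvd p v')"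
    using not_dvd exp_sums_mdvd_diff_single_Suc_iff[OF G, where u = 0] by (simp add: v'_def)
  have dvd': "\<forall>i\<in>{1..n}. \<exists>p\<in>exp_sums G t. mdvd p (var_exp i + v')"
    using dvd by (simp add: v'_def exp_sums_mdvd_diff_single_Suc_iff[OF G])
  have "0 \<notin> G"
  proof
    assume "0 \<in> G"
    then have "0 \<in> exp_sums G t"
      by (rule zero_mem_exp_sums)
    then show False
      using not_dvd zero_mdvd by blast
  qed
  with G have G0: "\<forall>g\<in>G. in_vars n g \<and> g \<noteq> 0"
    by blast
  have "\<not> var_exp ` {1..n} \<subseteq> G"
    using ne monideal_eq_if_var_exps_subset[OF _ G0] by blast
  then have "t \<le> tdeg n v'"
    by (rule tdeg_ge_if_not_vars_subset[OF G0 v' dvd'])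
  then show ?thesis
    by (rule exists_socle_exp_of_in_vars[OF G v' not_dvd' dvd'])
qed

lemma in_vars_xq_exps:
  assumes "s \<in> xq_exps n"
  shows "in_vars (Suc n) s"
proof -
  obtain i where "i \<in> {1..n}" "s = var_exp (Suc n) + var_exp i"
    using assms by blast
  then show ?thesis
    using in_vars_add[of "var_exp (Suc n)" "Suc n" "var_exp i"] by simp
qed

lemma Var_Suc_mult_mem_monideal_xq_exps:
  assumes "q \<in> monideal (Suc n) (var_exp ` {1..n})"
  shows "Var (Suc n) * q \<in> (monideal (Suc n) (xq_exps n) :: 'a::field mpoly set)"
proof -
  have "(Var (Suc n) :: 'a mpoly) \<in> monideal (Suc n) {var_exp (Suc n)}"
    by (simp add: Var_def monom_in_monideal_iff)
  then have "Var (Suc n) * q \<in> monideal (Suc n) {s + t | s t. s \<in> {var_exp (Suc n)} \<and> t \<in> var_exp ` {1..n}}"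
    using assms by (rule mult_mem_monideal)
  moreover have "{s + t | s t. s \<in> {var_exp (Suc n)} \<and> t \<in> var_exp ` {1..n}} = xq_exps n"
    by blast
  ultimately show ?thesis
    by simp
qed

lemma ideal_gen_Un_xq_eq_monideal:
  assumes G: "\<forall>g\<in>G. in_vars (Suc n) g"
  shows "ideal_gen (polyR (Suc n))
      (monideal (Suc n) G \<union> {Var (Suc n) * q | q. q \<in> monideal (Suc n) (var_exp ` {1..n})})
    = (monideal (Suc n) (G \<union> xq_exps n) :: 'a::field mpoly set)"
    (is "ideal_gen ?R (?I \<union> ?X) = ?L")
proof
  have X: "?X \<subseteq> monideal (Suc n) (xq_exps n)"
    using Var_Suc_mult_mem_monideal_xq_exps by blast
  show "ideal_gen ?R (?I \<union> ?X) \<subseteq> ?L"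
  proof (rule ideal_gen_least[OF _ is_ideal_monideal])
    have "?I \<subseteq> ?L" "monideal (Suc n) (xq_exps n) \<subseteq> ?L"
      using mdvd_refl by (intro monideal_subset, blast)+
    then show "?I \<union> ?X \<subseteq> ?L"
      using X by blast
  qed
  have "x \<in> ?I \<union> ?X" if "x \<in> monom ` (G \<union> xq_exps n)" for x
  proof -
    from that consider g where "g \<in> G" "x = monom g"
      | i where "i \<in> {1..n}" "x = monom (var_exp (Suc n) + var_exp i)"
      by blast
    then show ?thesis
    proof cases
      case 1
      then have "x \<in> ?I"
        using G by (simp add: monom_in_monideal_iff) (use mdvd_refl in blast)
      then show ?thesis
        by (rule UnI1)
    next
      case 2
      then have "(Var i :: 'a mpoly) \<in> monideal (Suc n) (var_exp ` {1..n})"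
        unfolding Var_def by (subst monom_in_monideal_iff) force+
      moreover have "x = Var (Suc n) * Var i"
        by (simp add: 2(2) Var_def monom_mult)
      ultimately have "x \<in> ?X"
        by (metis (mono_tags, lifting) mem_Collect_eq)
      then show ?thesis
        by (rule UnI2)
    qed
  qed
  then have "monom ` (G \<union> xq_exps n) \<subseteq> ideal_gen ?R (?I \<union> ?X)"
    using subset_ideal_gen[of "?I \<union> ?X" ?R] by (intro subsetI) (rule subsetD)
  moreover have "?I \<union> ?X \<subseteq> ?R"
    using monideal_subset_polyR order_trans[OF X monideal_subset_polyR] by (rule Un_least)
  ultimately have "ideal_gen ?R (monom ` (G \<union> xq_exps n)) \<subseteq> ideal_gen ?R (?I \<union> ?X)"
    by (rule ideal_gen_mono)
  moreover have "\<forall>s\<in>G \<union> xq_exps n. in_vars (Suc n) s"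
    using G in_vars_xq_exps by blast
  ultimately show "?L \<subseteq> ideal_gen ?R (?I \<union> ?X)"
    by (simp add: ideal_gen_monom_eq_monideal)
qed

lemma ideal_pow_Un_xq_eq_monideal:
  assumes G: "\<forall>g\<in>G. in_vars (Suc n) g"
  shows "ideal_pow (polyR (Suc n)) (ideal_gen (polyR (Suc n))
      (monideal (Suc n) G \<union> {Var (Suc n) * q | q. q \<in> monideal (Suc n) (var_exp ` {1..n})})) t
    = (monideal (Suc n) (exp_sums (G \<union> xq_exps n) t) :: 'a::field mpoly set)"
proof -
  have "\<forall>s\<in>G \<union> xq_exps n. in_vars (Suc n) s"
    using G in_vars_xq_exps by blast
  then show ?thesis
    unfolding ideal_gen_Un_xq_eq_monideal[OF G] by (rule ideal_pow_monideal)
qed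

lemma in_vars_mingens_if_lookup_eq_0:
  assumes "\<forall>u\<in>mingens (Suc n) I. Poly_Mapping.lookup u (Suc n) = 0" "g \<in> mingens (Suc n) I"
  shows "in_vars n g"
proof -
  have "in_vars (Suc n) g \<and> Poly_Mapping.lookup g (Suc n) = 0"
    using assms by (simp add: mingens_def)
  then show ?thesis
    by (simp only: in_vars_Suc_iff)
qed

theorem proposition3p2:
  fixes n t lam :: nat and I :: "'a::field mpoly set" and v :: "nat \<Rightarrow>\<^sub>0 nat"
  assumes monI: "is_monomial_ideal (n + 1) I"
    and gcd: "\<forall>u\<in>mingens (n + 1) I. Poly_Mapping.lookup u (n + 1) = 0"
    and Ineq: "I \<noteq> ideal_gen (polyR (n + 1)) (Var ` {1..n})"
    and t: "t \<ge> 1"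
    and v: "Poly_Mapping.keys v \<subseteq> {1..n + 1}"
    and col: "colon (polyR (n + 1)) (ideal_pow (polyR (n + 1)) I t) (monom v)
              = ideal_gen (polyR (n + 1)) (Var ` {1..n})"
    and lam: "lam \<in> {1..n}"
    and cond: "\<forall>f M. (\<forall>i<t. f i \<in> mingens (n + 1) I) \<and> Poly_Mapping.keys M \<subseteq> {1..n + 1} \<and>
                  Poly_Mapping.single lam 1 + v = (\<Sum>i<t. f i) + M \<longrightarrow>
                  (\<exists>j<t. Poly_Mapping.lookup (M + f j) lam \<ge> 1 \<and> M + f j \<noteq> Poly_Mapping.single lam 1)"
  shows "ideal_gen (polyR (n + 1)) (Var ` {1..n + 1})
         \<in> Ass (polyR (n + 1))
             (ideal_pow (polyR (n + 1))
                (ideal_gen (polyR (n + 1))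
                   (I \<union> {Var (n + 1) * q | q. q \<in> ideal_gen (polyR (n + 1)) (Var ` {1..n})})) t)"
proof -
  define G where "G = mingens (Suc n) I"
  have G: "\<forall>g\<in>G. in_vars n g"
    using gcd in_vars_mingens_if_lookup_eq_0 unfolding Suc_eq_plus1[symmetric] G_def by blast
  then have G': "\<forall>g\<in>G. in_vars (Suc n) g"
    using in_vars_mono[where M = n and N = "Suc n"] by simp
  have I: "I = monideal (Suc n) G"
    using monI monomial_ideal_eq_monideal_mingens by (simp add: G_def)
  have q: "ideal_gen (polyR (Suc n)) (Var ` {1..n}) = (monideal (Suc n) (var_exp ` {1..n}) :: 'a mpoly set)"
    by (rule ideal_gen_Var) simp
  have v': "in_vars (Suc n) v"
    using v by simp
  have "colon (polyR (Suc n)) (monideal (Suc n) (exp_sums G t)) (monom v)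
      = (monideal (Suc n) (var_exp ` {1..n}) :: 'a mpoly set)"
    using col unfolding Suc_eq_plus1[symmetric] I ideal_pow_monideal[OF G'] q .
  then have "\<not> (\<exists>p\<in>exp_sums G t. mdvd p v)" "\<forall>i\<in>{1..n}. \<exists>p\<in>exp_sums G t. mdvd p (var_exp i + v)"
    using colon_monideal_eq_varsD[OF v' le_SucI[OF order_refl]] by blast+
  moreover have "monideal (Suc n) G \<noteq> (monideal (Suc n) (var_exp ` {1..n}) :: 'a mpoly set)"
    using Ineq unfolding Suc_eq_plus1[symmetric] I q .
  ultimately obtain w where "socle_exp (Suc n) (exp_sums (G \<union> xq_exps n) t) w"
    using exists_socle_exp[OF G v'] by blast
  then show ?thesis
    unfolding Suc_eq_plus1[symmetric] I q ideal_pow_Un_xq_eq_monideal[OF G']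
    by (rule maximal_ideal_mem_Ass_if_socle_exp)
qed

end
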